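(* Let $k$ be a field of characteristic $\neq 2$, let $\mathfrak g$ be a central simple finite-dimensional Lie algebra over $k$, and let $A$ be a unital commutative associative $k$-algebra. Then every ideal of $\mathfrak g\otimes_k A$ is closed.
   Context: An ideal $\mathfrak a$ of a Lie algebra $L$ is closed if $Z(\mathfrak a):=\{x\in L:[x,L]\subseteq\mathfrak a\}$ equals $\mathfrak a$ (equivalently, $L/\mathfrak a$ has trivial center). $\mathfrak g\otimes_k A$ has bracket $[a\otimes f,b\otimes g]=[a,b]\otimes fg$. *)

theory Defs
  imports Main "HOL.Vector_Spaces" "HOL-Library.Function_Algebras"
begin

definition lie_algebra :: "('k::field \<Rightarrow> 'g::ab_group_add \<Rightarrow> 'g) \<Rightarrow> ('g \<Rightarrow> 'g \<Rightarrow> 'g) \<Rightarrow> bool" where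
  "lie_algebra sg br \<longleftrightarrow> vector_space sg \<and>
     (\<forall>x y z. br (x + y) z = br x z + br y z) \<and>
     (\<forall>x y z. br x (y + z) = br x y + br x z) \<and>
     (\<forall>c x y. br (sg c x) y = sg c (br x y)) \<and>
     (\<forall>c x y. br x (sg c y) = sg c (br x y)) \<and>
     (\<forall>x. br x x = 0) \<and>
     (\<forall>x y z. br x (br y z) + br y (br z x) + br z (br x y) = 0)"

definition finite_dim :: "('k::field \<Rightarrow> 'g::ab_group_add \<Rightarrow> 'g) \<Rightarrow> bool" where
  "finite_dim sg \<longleftrightarrow> (\<exists>B. finite B \<and> module.span sg B = UNIV)"

definition lie_ideal ::
  "'l set \<Rightarrow> ('l \<Rightarrow> 'l \<Rightarrow> 'l) \<Rightarrow> ('k \<Rightarrow> 'l \<Rightarrow> 'l) \<Rightarrow> ('l \<Rightarrow> 'l \<Rightarrow> 'l) \<Rightarrow> 'l \<Rightarrow> 'l set \<Rightarrow> bool" where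
  "lie_ideal L add sc br z I \<longleftrightarrow> I \<subseteq> L \<and> z \<in> I \<and>
     (\<forall>x\<in>I. \<forall>y\<in>I. add x y \<in> I) \<and> (\<forall>c. \<forall>x\<in>I. sc c x \<in> I) \<and>
     (\<forall>x\<in>I. \<forall>y\<in>L. br x y \<in> I \<and> br y x \<in> I)"

definition lie_Z :: "'l set \<Rightarrow> ('l \<Rightarrow> 'l \<Rightarrow> 'l) \<Rightarrow> 'l set \<Rightarrow> 'l set" where
  "lie_Z L br I = {x \<in> L. \<forall>y\<in>L. br x y \<in> I}"

definition closed_ideal :: "'l set \<Rightarrow> ('l \<Rightarrow> 'l \<Rightarrow> 'l) \<Rightarrow> 'l set \<Rightarrow> bool" where
  "closed_ideal L br I \<longleftrightarrow> lie_Z L br I = I"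

definition simple_lie :: "('k::field \<Rightarrow> 'g::ab_group_add \<Rightarrow> 'g) \<Rightarrow> ('g \<Rightarrow> 'g \<Rightarrow> 'g) \<Rightarrow> bool" where
  "simple_lie sg br \<longleftrightarrow> (\<exists>x y. br x y \<noteq> 0) \<and>
     (\<forall>I. lie_ideal UNIV (+) sg br 0 I \<longrightarrow> I = {0} \<or> I = UNIV)"

definition central_lie :: "('k::field \<Rightarrow> 'g::ab_group_add \<Rightarrow> 'g) \<Rightarrow> ('g \<Rightarrow> 'g \<Rightarrow> 'g) \<Rightarrow> bool" where
  "central_lie sg br \<longleftrightarrow> (\<forall>\<chi>. Vector_Spaces.linear sg sg \<chi> \<and> (\<forall>x y. \<chi> (br x y) = br x (\<chi> y))
       \<longrightarrow> (\<exists>c. \<forall>x. \<chi> x = sg c x))"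

definition central_simple_lie :: "('k::field \<Rightarrow> 'g::ab_group_add \<Rightarrow> 'g) \<Rightarrow> ('g \<Rightarrow> 'g \<Rightarrow> 'g) \<Rightarrow> bool" where
  "central_simple_lie sg br \<longleftrightarrow> simple_lie sg br \<and> central_lie sg br"

definition k_algebra :: "('k::field \<Rightarrow> 'a::comm_ring_1 \<Rightarrow> 'a) \<Rightarrow> bool" where
  "k_algebra sa \<longleftrightarrow> vector_space sa \<and> (\<forall>c a b. sa c (a * b) = sa c a * b)"

section \<open>The tensor product g \<otimes>_k A, constructed as free vector space on g \<times> A modulo bilinearity\<close>

definition fscale :: "'k::field \<Rightarrow> ('b \<Rightarrow> 'k) \<Rightarrow> ('b \<Rightarrow> 'k)" where
  "fscale c f = (\<lambda>p. c * f p)"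

definition fsupp :: "('b \<Rightarrow> 'k::zero) \<Rightarrow> 'b set" where
  "fsupp f = {p. f p \<noteq> 0}"

definition delta :: "'b \<Rightarrow> 'b \<Rightarrow> 'k::{zero,one}" where
  "delta p = (\<lambda>q. if q = p then 1 else 0)"

definition tensor_rels ::
  "('k::field \<Rightarrow> 'g::ab_group_add \<Rightarrow> 'g) \<Rightarrow> ('k \<Rightarrow> 'a::comm_ring_1 \<Rightarrow> 'a) \<Rightarrow> ('g \<times> 'a \<Rightarrow> 'k) set" where
  "tensor_rels sg sa =
     {delta (x + y, a) - delta (x, a) - delta (y, a) | x y a. True} \<union>
     {delta (x, a + b) - delta (x, a) - delta (x, b) | x a b. True} \<union>
     {delta (sg c x, a) - fscale c (delta (x, a)) | c x a. True} \<union>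
     {delta (x, sa c a) - fscale c (delta (x, a)) | c x a. True}"

definition tensor_R ::
  "('k::field \<Rightarrow> 'g::ab_group_add \<Rightarrow> 'g) \<Rightarrow> ('k \<Rightarrow> 'a::comm_ring_1 \<Rightarrow> 'a) \<Rightarrow> ('g \<times> 'a \<Rightarrow> 'k) set" where
  "tensor_R sg sa = module.span fscale (tensor_rels sg sa)"

definition tcls ::
  "('k::field \<Rightarrow> 'g::ab_group_add \<Rightarrow> 'g) \<Rightarrow> ('k \<Rightarrow> 'a::comm_ring_1 \<Rightarrow> 'a) \<Rightarrow> ('g \<times> 'a \<Rightarrow> 'k) \<Rightarrow> ('g \<times> 'a \<Rightarrow> 'k) set" where
  "tcls sg sa f = {h. h - f \<in> tensor_R sg sa}"

definition tensor_carrier ::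
  "('k::field \<Rightarrow> 'g::ab_group_add \<Rightarrow> 'g) \<Rightarrow> ('k \<Rightarrow> 'a::comm_ring_1 \<Rightarrow> 'a) \<Rightarrow> ('g \<times> 'a \<Rightarrow> 'k) set set" where
  "tensor_carrier sg sa = {tcls sg sa f | f. finite (fsupp f)}"

definition trep :: "('b \<Rightarrow> 'k) set \<Rightarrow> ('b \<Rightarrow> 'k)" where
  "trep C = (SOME f. f \<in> C)"

definition tadd ::
  "('k::field \<Rightarrow> 'g::ab_group_add \<Rightarrow> 'g) \<Rightarrow> ('k \<Rightarrow> 'a::comm_ring_1 \<Rightarrow> 'a) \<Rightarrow>
   ('g \<times> 'a \<Rightarrow> 'k) set \<Rightarrow> ('g \<times> 'a \<Rightarrow> 'k) set \<Rightarrow> ('g \<times> 'a \<Rightarrow> 'k) set" where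
  "tadd sg sa C D = tcls sg sa (trep C + trep D)"

definition tsc ::
  "('k::field \<Rightarrow> 'g::ab_group_add \<Rightarrow> 'g) \<Rightarrow> ('k \<Rightarrow> 'a::comm_ring_1 \<Rightarrow> 'a) \<Rightarrow>
   'k \<Rightarrow> ('g \<times> 'a \<Rightarrow> 'k) set \<Rightarrow> ('g \<times> 'a \<Rightarrow> 'k) set" where
  "tsc sg sa c C = tcls sg sa (fscale c (trep C))"

definition tzero ::
  "('k::field \<Rightarrow> 'g::ab_group_add \<Rightarrow> 'g) \<Rightarrow> ('k \<Rightarrow> 'a::comm_ring_1 \<Rightarrow> 'a) \<Rightarrow> ('g \<times> 'a \<Rightarrow> 'k) set" where
  "tzero sg sa = tcls sg sa 0"

text \<open>Bracket on formal sums: bilinear extension of [x (x) a, y (x) b] = [x,y] (x) ab.\<close>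
definition fbr :: "('g \<Rightarrow> 'g \<Rightarrow> 'g) \<Rightarrow> ('g \<times> 'a::comm_ring_1 \<Rightarrow> 'k::field) \<Rightarrow> ('g \<times> 'a \<Rightarrow> 'k) \<Rightarrow> ('g \<times> 'a \<Rightarrow> 'k)" where
  "fbr br f h = (\<Sum>p\<in>fsupp f. \<Sum>q\<in>fsupp h.
      fscale (f p * h q) (delta (br (fst p) (fst q), snd p * snd q)))"

definition tbr ::
  "('k::field \<Rightarrow> 'g::ab_group_add \<Rightarrow> 'g) \<Rightarrow> ('k \<Rightarrow> 'a::comm_ring_1 \<Rightarrow> 'a) \<Rightarrow> ('g \<Rightarrow> 'g \<Rightarrow> 'g) \<Rightarrow>
   ('g \<times> 'a \<Rightarrow> 'k) set \<Rightarrow> ('g \<times> 'a \<Rightarrow> 'k) set \<Rightarrow> ('g \<times> 'a \<Rightarrow> 'k) set" where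
  "tbr sg sa br C D = tcls sg sa (fbr br (trep C) (trep D))"

end

theory Submission
  imports Defs
begin

text \<open>Let M be the ideal of the multiplication algebra of g spanned by the maps
  v \<mapsto> [y1, [y2, ... [v, yn]...]] with n \<ge> 1. If x \<in> Z(a) then (T \<otimes> id) x \<in> a for all
  T \<in> M: for T = [-, y] this is [x, y \<otimes> 1] \<in> a, and a is stable under further brackets with
  y \<otimes> 1. By a Jacobson density argument M contains, for every finite set of vectors, a map
  fixing all of them: simplicity makes the orbit M w of every w \<noteq> 0 all of g, and centrality
  turns every map T a \<mapsto> T u commuting with ad into a scalar. As g is finite-dimensional,
  id \<in> M, whence x \<in> a.\<close>

lemma lie_idealD:
  assumes "lie_ideal L add sc br z I"
  shows "I \<subseteq> L"
    and "x \<in> I \<Longrightarrow> y \<in> I \<Longrightarrow> add x y \<in> I"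
    and "x \<in> I \<Longrightarrow> sc c x \<in> I"
    and "x \<in> I \<Longrightarrow> y \<in> L \<Longrightarrow> br x y \<in> I"
    and "x \<in> I \<Longrightarrow> y \<in> L \<Longrightarrow> br y x \<in> I"
  using assms unfolding lie_ideal_def by blast+

locale lie =
  fixes sg :: "'k::field \<Rightarrow> 'g::ab_group_add \<Rightarrow> 'g"
    and br :: "'g \<Rightarrow> 'g \<Rightarrow> 'g"
  assumes lie_algebra: "lie_algebra sg br"
begin

sublocale vector_space sg
  using lie_algebra unfolding lie_algebra_def by blast

lemma br_add_left: "br (x + y) z = br x z + br y z"
  and br_add_right: "br x (y + z) = br x y + br x z"
  and br_scale_left: "br (sg c x) y = sg c (br x y)"
  and br_scale_right: "br x (sg c y) = sg c (br x y)"
  and br_self: "br x x = 0"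
  using lie_algebra unfolding lie_algebra_def by blast+

lemma br_zero_left [simp]: "br 0 y = 0"
  using br_add_left[of 0 0 y] by simp

lemma br_zero_right [simp]: "br x 0 = 0"
  using br_add_right[of x 0 0] by simp

lemma br_antisym: "br x y = - br y x"
proof -
  have "br (x + y) (x + y) = 0" by (rule br_self)
  then have "br x x + br x y + (br y x + br y y) = 0"
    by (simp add: br_add_left br_add_right add_ac)
  then have "br x y + br y x = 0"
    by (simp add: br_self)
  then show ?thesis by (simp add: eq_neg_iff_add_eq_0)
qed

lemma scale_minus_one: "sg (-1) x = - x"
  by (metis scale_minus_left scale_one)

lemma linearI:
  assumes "\<And>x y. T (x + y) = T x + T y" and "\<And>c x. T (sg c x) = sg c (T x)"
  shows "Vector_Spaces.linear sg sg T"
  using assms vector_space_axioms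
  by (auto simp: Vector_Spaces.linear_def module_hom_def module_hom_axioms_def module_iff_vector_space)

inductive_set mult_ideal :: "('g \<Rightarrow> 'g) set" where
  right_mult: "(\<lambda>v. br v y) \<in> mult_ideal"
| left_mult: "T \<in> mult_ideal \<Longrightarrow> (\<lambda>v. br y (T v)) \<in> mult_ideal"
| add: "T \<in> mult_ideal \<Longrightarrow> S \<in> mult_ideal \<Longrightarrow> (\<lambda>v. T v + S v) \<in> mult_ideal"
| scale: "T \<in> mult_ideal \<Longrightarrow> (\<lambda>v. sg c (T v)) \<in> mult_ideal"

lemma mult_ideal_add:
  "T \<in> mult_ideal \<Longrightarrow> T (x + y) = T x + T y"
  by (induction T rule: mult_ideal.induct)
    (auto simp: br_add_left br_add_right scale_right_distrib algebra_simps)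

lemma mult_ideal_scale:
  "T \<in> mult_ideal \<Longrightarrow> T (sg c x) = sg c (T x)"
  by (induction T rule: mult_ideal.induct)
    (auto simp: br_scale_left br_scale_right scale_right_distrib scale_left_commute)

lemma mult_ideal_zero: "T \<in> mult_ideal \<Longrightarrow> T 0 = 0"
  using mult_ideal_add[of T 0 0] by simp

lemma mult_ideal_diff: "T \<in> mult_ideal \<Longrightarrow> T (x - y) = T x - T y"
  by (metis mult_ideal_add diff_add_cancel add_diff_cancel)

lemma mult_ideal_minus:
  "T \<in> mult_ideal \<Longrightarrow> S \<in> mult_ideal \<Longrightarrow> (\<lambda>v. T v - S v) \<in> mult_ideal"
  using mult_ideal.add[OF _ mult_ideal.scale[of S "-1"], of T] by (simp add: scale_minus_one)

lemma mult_ideal_compose: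
  assumes "S \<in> mult_ideal" and T: "T \<in> mult_ideal"
  shows "(\<lambda>v. S (T v)) \<in> mult_ideal"
  using assms(1)
proof induction
  case (right_mult y)
  have "(\<lambda>v. sg (-1) (br y (T v))) \<in> mult_ideal"
    by (intro mult_ideal.scale mult_ideal.left_mult T)
  then show ?case
    by (simp add: scale_minus_one br_antisym[of y])
qed (auto intro: mult_ideal.intros)

lemma mult_ideal_eq_0_on_span:
  assumes "T \<in> mult_ideal" and "\<forall>s\<in>S. T s = 0" and "x \<in> span S"
  shows "T x = 0"
  using assms(3)
  by (induction rule: span_induct_alt) (auto simp: assms(1,2) mult_ideal_zero mult_ideal_add mult_ideal_scale)

lemma mult_ideal_fixes_span:
  assumes "T \<in> mult_ideal" and "\<forall>s\<in>S. T s = s" and "x \<in> span S"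
  shows "T x = x"
  using assms(3)
  by (induction rule: span_induct_alt) (auto simp: assms(1,2) mult_ideal_zero mult_ideal_add mult_ideal_scale)

lemma lie_ideal_center: "lie_ideal UNIV (+) sg br 0 {v. \<forall>y. br v y = 0}"
  unfolding lie_ideal_def
proof (intro conjI ballI allI)
  fix x y assume "x \<in> {v. \<forall>y. br v y = 0}"
  moreover from this have "br y x = 0"
    using br_antisym[of y x] by simp
  ultimately show "br x y \<in> {v. \<forall>y. br v y = 0}" "br y x \<in> {v. \<forall>y. br v y = 0}"
    by simp_all
qed (simp_all add: br_add_left br_scale_left)

definition mult_submodule :: "('g \<Rightarrow> 'g) set \<Rightarrow> bool" where
  "mult_submodule J \<longleftrightarrow>
     (\<forall>T\<in>J. \<forall>y. (\<lambda>v. br y (T v)) \<in> J) \<and>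
     (\<forall>T\<in>J. \<forall>S\<in>J. (\<lambda>v. T v + S v) \<in> J) \<and>
     (\<forall>T\<in>J. \<forall>c. (\<lambda>v. sg c (T v)) \<in> J)"

lemma mult_submoduleI:
  assumes "\<And>T y. T \<in> J \<Longrightarrow> (\<lambda>v. br y (T v)) \<in> J"
    and "\<And>T S. T \<in> J \<Longrightarrow> S \<in> J \<Longrightarrow> (\<lambda>v. T v + S v) \<in> J"
    and "\<And>T c. T \<in> J \<Longrightarrow> (\<lambda>v. sg c (T v)) \<in> J"
  shows "mult_submodule J"
  using assms unfolding mult_submodule_def by blast

lemma
  assumes "mult_submodule J" and "T \<in> J"
  shows mult_submodule_left_mult: "(\<lambda>v. br y (T v)) \<in> J"
    and mult_submodule_scale: "(\<lambda>v. sg c (T v)) \<in> J"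
    and mult_submodule_add: "S \<in> J \<Longrightarrow> (\<lambda>v. T v + S v) \<in> J"
  using assms unfolding mult_submodule_def by blast+

lemma mult_submodule_mult_ideal: "mult_submodule mult_ideal"
  by (rule mult_submoduleI) (auto intro: mult_ideal.intros)

lemma mult_submodule_annihilator:
  "mult_submodule {T \<in> mult_ideal. \<forall>s\<in>S. T s = 0}"
  by (rule mult_submoduleI) (auto intro: mult_ideal.intros)

lemma mult_submodule_orbit_ideal:
  assumes J: "mult_submodule J" and "T\<^sub>0 \<in> J"
  shows "lie_ideal UNIV (+) sg br 0 {T a | T. T \<in> J}"
proof -
  let ?O = "{T a | T. T \<in> J}"
  have left: "br y x \<in> ?O" if "x \<in> ?O" for x y
  proof -
    from that obtain T where "T \<in> J" "x = T a" by blast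
    then show ?thesis
      using mult_submodule_left_mult[OF J] by (intro CollectI exI[of _ "\<lambda>v. br y (T v)"]) simp
  qed
  have scale: "sg c x \<in> ?O" if "x \<in> ?O" for c x
  proof -
    from that obtain T where "T \<in> J" "x = T a" by blast
    then show ?thesis
      using mult_submodule_scale[OF J] by (intro CollectI exI[of _ "\<lambda>v. sg c (T v)"]) simp
  qed
  have add: "x + y \<in> ?O" if "x \<in> ?O" "y \<in> ?O" for x y
  proof -
    from that obtain T S where "T \<in> J" "x = T a" "S \<in> J" "y = S a" by blast
    then show ?thesis
      using mult_submodule_add[OF J] by (intro CollectI exI[of _ "\<lambda>v. T v + S v"]) simp
  qed
  have "sg 0 (T\<^sub>0 a) \<in> ?O"
    by (rule scale) (use \<open>T\<^sub>0 \<in> J\<close> in blast)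
  then have "0 \<in> ?O" by simp
  moreover have "br x y \<in> ?O" if "x \<in> ?O" for x y
  proof -
    have "br x y = sg (-1) (br y x)"
      by (simp add: scale_minus_one br_antisym[of y x])
    show ?thesis unfolding \<open>br x y = _\<close> by (rule scale[OF left[OF that]])
  qed
  ultimately show ?thesis
    unfolding lie_ideal_def using left scale add by simp
qed

end

locale central_simple = lie +
  assumes central_simple: "central_simple_lie sg br"
begin

lemma simple_ideal: "lie_ideal UNIV (+) sg br 0 J \<Longrightarrow> J = {0} \<or> J = UNIV"
  using central_simple unfolding central_simple_lie_def simple_lie_def by blast

lemma centroid_scalar:
  assumes "Vector_Spaces.linear sg sg \<chi>" and "\<And>x y. \<chi> (br x y) = br x (\<chi> y)"
  obtains c where "\<And>x. \<chi> x = sg c x"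
  using assms central_simple unfolding central_simple_lie_def central_lie_def by blast

lemma right_mult_nonzero:
  assumes "u \<noteq> 0"
  obtains y where "br u y \<noteq> 0"
proof -
  let ?Z = "{v. \<forall>y. br v y = 0}"
  obtain x y where "br x y \<noteq> 0"
    using central_simple unfolding central_simple_lie_def simple_lie_def by blast
  then have "x \<notin> ?Z" by blast
  then have "?Z \<noteq> UNIV" by blast
  then have "?Z = {0}" using simple_ideal[OF lie_ideal_center] by blast
  with assms have "u \<notin> ?Z" by simp
  with that show thesis by blast
qed

lemma mult_submodule_orbit_UNIV:
  assumes J: "mult_submodule J" and "T \<in> J" and "T a \<noteq> 0"
  shows "{T a | T. T \<in> J} = UNIV"
proof -
  have "{T a | T. T \<in> J} \<noteq> {0}" using assms(2,3) by blast
  then show ?thesis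
    using simple_ideal[OF mult_submodule_orbit_ideal[OF J \<open>T \<in> J\<close>]] by blast
qed

lemma mult_ideal_orbit_UNIV:
  assumes "w \<noteq> 0"
  shows "{T w | T. T \<in> mult_ideal} = UNIV"
proof -
  obtain y where "br w y \<noteq> 0" using right_mult_nonzero[OF assms] .
  then show ?thesis
    using mult_submodule_orbit_UNIV[OF mult_submodule_mult_ideal mult_ideal.right_mult[of y]] by simp
qed

text \<open>The kernel condition makes T a \<mapsto> T u a well-defined element of the centroid.\<close>
lemma mult_submodule_factor_scalar:
  assumes J: "mult_submodule J"
    and orbit: "{T a | T. T \<in> J} = UNIV"
    and kill: "\<forall>T\<in>J. T a = 0 \<longrightarrow> T u = 0"
  shows "\<exists>c. \<forall>T\<in>J. T u = sg c (T a)"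
proof -
  have minus: "(\<lambda>v. T v - S v) \<in> J" if "T \<in> J" "S \<in> J" for T S
    using mult_submodule_add[OF J that(1) mult_submodule_scale[OF J that(2), of "-1"]]
    by (simp add: scale_minus_one)
  have well_defined: "T u = S u" if "T \<in> J" "S \<in> J" "T a = S a" for T S
    using kill[rule_format, OF minus[OF that(1,2)]] that(3) by simp
  have "\<forall>w. \<exists>T. T \<in> J \<and> T a = w"
  proof
    fix w
    have "w \<in> {T a | T. T \<in> J}" using orbit by simp
    then show "\<exists>T. T \<in> J \<and> T a = w" by blast
  qed
  then obtain pre where "\<forall>w. pre w \<in> J \<and> pre w a = w"
    by (rule choice[THEN exE])
  then have pre: "\<And>w. pre w \<in> J" "\<And>w. pre w a = w"
    by simp_all
  define \<chi> where "\<chi> w = pre w u" for w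
  have \<chi>: "\<chi> (T a) = T u" if "T \<in> J" for T
    unfolding \<chi>_def using well_defined[OF pre(1) that] pre(2) by simp
  have "Vector_Spaces.linear sg sg \<chi>"
  proof (rule linearI)
    fix x y
    show "\<chi> (x + y) = \<chi> x + \<chi> y"
      using \<chi>[OF mult_submodule_add[OF J pre(1) pre(1)]] by (simp add: pre(2) \<chi>_def)
  next
    fix c x
    show "\<chi> (sg c x) = sg c (\<chi> x)"
      using \<chi>[OF mult_submodule_scale[OF J pre(1)]] by (simp add: pre(2) \<chi>_def)
  qed
  moreover have "\<chi> (br x y) = br x (\<chi> y)" for x y
    using \<chi>[OF mult_submodule_left_mult[OF J pre(1)]] by (simp add: pre(2) \<chi>_def)
  ultimately obtain c where c: "\<And>x. \<chi> x = sg c x"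
    using centroid_scalar by blast
  have "T u = sg c (T a)" if "T \<in> J" for T
    using \<chi>[OF that] c[of "T a"] by simp
  then show ?thesis by blast
qed

lemma mult_ideal_separates_insert:
  assumes IH: "\<And>u. u \<notin> span S \<Longrightarrow> \<exists>T\<in>mult_ideal. (\<forall>s\<in>S. T s = 0) \<and> T u \<noteq> 0"
    and a: "a \<notin> span S" and u: "u \<notin> span (insert a S)"
  shows "\<exists>T\<in>mult_ideal. (\<forall>s\<in>insert a S. T s = 0) \<and> T u \<noteq> 0"
proof (rule ccontr)
  assume contra: "\<not> ?thesis"
  define J where "J = {T \<in> mult_ideal. \<forall>s\<in>S. T s = 0}"
  have J: "mult_submodule J" "J \<subseteq> mult_ideal"
    unfolding J_def using mult_submodule_annihilator by auto
  from IH[OF a] obtain T where "T \<in> J" "T a \<noteq> 0"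
    unfolding J_def by blast
  then have orbit: "{T a | T. T \<in> J} = UNIV"
    by (rule mult_submodule_orbit_UNIV[OF J(1)])
  have "\<forall>T\<in>J. T a = 0 \<longrightarrow> T u = 0"
    using contra unfolding J_def by auto
  then obtain c where c: "\<forall>T\<in>J. T u = sg c (T a)"
    using mult_submodule_factor_scalar[OF J(1) orbit] by blast
  have "u - sg c a \<in> span S"
  proof (rule ccontr)
    assume "u - sg c a \<notin> span S"
    then obtain T where "T \<in> J" "T (u - sg c a) \<noteq> 0"
      using IH unfolding J_def by blast
    moreover from this have "T (u - sg c a) = 0"
      using c J(2) by (auto simp: mult_ideal_diff mult_ideal_scale)
    ultimately show False by blast
  qed
  then have "u \<in> span (insert a S)"
    using span_breakdown_eq by blast
  with u show False ..
qed

lemma mult_ideal_separates: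
  assumes "finite S" and "u \<notin> span S"
  shows "\<exists>T\<in>mult_ideal. (\<forall>s\<in>S. T s = 0) \<and> T u \<noteq> 0"
  using assms
proof (induction S arbitrary: u rule: finite_induct)
  case empty
  then have "u \<noteq> 0" by simp
  then obtain y where "br u y \<noteq> 0" by (rule right_mult_nonzero)
  then show ?case
    by (intro bexI[of _ "\<lambda>v. br v y"]) (simp_all add: mult_ideal.right_mult)
next
  case (insert a S)
  show ?case
  proof (cases "a \<in> span S")
    case True
    then have "span (insert a S) = span S" by (rule span_redundant)
    with insert.prems obtain T where T: "T \<in> mult_ideal" "\<forall>s\<in>S. T s = 0" "T u \<noteq> 0"
      using insert.IH by blast
    moreover have "T a = 0" using mult_ideal_eq_0_on_span[OF T(1,2) True] .
    ultimately show ?thesis by auto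
  next
    case False
    show ?thesis
      by (rule mult_ideal_separates_insert[OF insert.IH False insert.prems])
  qed
qed

lemma mult_ideal_fixes_finite:
  assumes "finite S"
  shows "\<exists>T\<in>mult_ideal. \<forall>s\<in>S. T s = s"
  using assms
proof (induction rule: finite_induct)
  case empty
  show ?case using mult_ideal.right_mult by blast
next
  case (insert u S)
  then obtain T where T: "T \<in> mult_ideal" "\<forall>s\<in>S. T s = s" by blast
  show ?case
  proof (cases "u \<in> span S")
    case True
    then have "T u = u" by (rule mult_ideal_fixes_span[OF T])
    with T show ?thesis by blast
  next
    case False
    obtain T\<^sub>0 where T\<^sub>0: "T\<^sub>0 \<in> mult_ideal" "\<forall>s\<in>S. T\<^sub>0 s = 0" "T\<^sub>0 u \<noteq> 0"
      using mult_ideal_separates[OF insert(1) False] by blast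
    have "u \<in> {R (T\<^sub>0 u) | R. R \<in> mult_ideal}"
      using mult_ideal_orbit_UNIV[OF T\<^sub>0(3)] by simp
    then obtain R where R: "R \<in> mult_ideal" "R (T\<^sub>0 u) = u" by auto
    define E where "E = (\<lambda>v. R (T\<^sub>0 v))"
    have E: "E \<in> mult_ideal" "\<forall>s\<in>S. E s = 0" "E u = u"
      unfolding E_def using mult_ideal_compose[OF R(1) T\<^sub>0(1)] T\<^sub>0(2) R(2) mult_ideal_zero[OF R(1)]
      by simp_all
    txt \<open>T + E - T \<circ> E fixes S, where E vanishes, and u, which E fixes.\<close>
    have "\<forall>s\<in>insert u S. E s + T s - T (E s) = s"
      using E(2,3) T(2) mult_ideal_zero[OF T(1)] by simp
    moreover have "(\<lambda>v. E v + T v - T (E v)) \<in> mult_ideal"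
      using mult_ideal_minus[OF mult_ideal.add[OF E(1) T(1)] mult_ideal_compose[OF T(1) E(1)]] by simp
    ultimately show ?thesis by (rule bexI)
  qed
qed

lemma id_in_mult_ideal:
  assumes "finite_dim sg"
  shows "(\<lambda>v. v) \<in> mult_ideal"
proof -
  obtain B where B: "finite B" "span B = UNIV"
    using assms unfolding finite_dim_def by blast
  obtain T where T: "T \<in> mult_ideal" "\<forall>s\<in>B. T s = s"
    using mult_ideal_fixes_finite[OF B(1)] by blast
  have "T = (\<lambda>v. v)"
    using mult_ideal_fixes_span[OF T] B(2) by auto
  with T(1) show ?thesis by simp
qed

end

lemma fscale_apply: "fscale c f p = c * f p"
  by (simp add: fscale_def)

interpretation formal: vector_space "fscale :: 'k::field \<Rightarrow> ('b \<Rightarrow> 'k) \<Rightarrow> ('b \<Rightarrow> 'k)"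
  by unfold_locales (auto simp: fscale_def algebra_simps)

lemma sum_fun_apply: "sum F A x = (\<Sum>i\<in>A. F i x)"
  by (induction A rule: infinite_finite_induct) auto

lemma fsupp_zero [simp]: "fsupp 0 = {}" "fsupp (\<lambda>_. 0) = {}"
  by (auto simp: fsupp_def)

lemma fsupp_delta [simp]: "fsupp (delta p :: 'b \<Rightarrow> 'k::zero_neq_one) = {p}"
  by (auto simp: fsupp_def delta_def)

lemma finite_fsupp_add:
  "finite (fsupp f) \<Longrightarrow> finite (fsupp g) \<Longrightarrow> finite (fsupp (f + g :: 'b \<Rightarrow> 'k::ab_group_add))"
  by (rule finite_subset[of _ "fsupp f \<union> fsupp g"]) (auto simp: fsupp_def)

lemma finite_fsupp_diff:
  "finite (fsupp f) \<Longrightarrow> finite (fsupp g) \<Longrightarrow> finite (fsupp (f - g :: 'b \<Rightarrow> 'k::ab_group_add))"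
  by (rule finite_subset[of _ "fsupp f \<union> fsupp g"]) (auto simp: fsupp_def)

lemma fsupp_fscale_subset: "fsupp (fscale c f) \<subseteq> fsupp f"
  by (auto simp: fsupp_def fscale_apply)

lemma finite_fsupp_fscale: "finite (fsupp f) \<Longrightarrow> finite (fsupp (fscale c f))"
  by (rule finite_subset[OF fsupp_fscale_subset])

lemma finite_fsupp_sum:
  "(\<And>i. i \<in> A \<Longrightarrow> finite (fsupp (G i))) \<Longrightarrow> finite (fsupp (\<Sum>i\<in>A. G i :: 'b \<Rightarrow> 'k::ab_group_add))"
  by (induction A rule: infinite_finite_induct) (auto intro!: finite_fsupp_add)

lemma fsupp_expansion:
  assumes "finite (fsupp f)"
  shows "f = (\<Sum>p\<in>fsupp f. fscale (f p) (delta p :: 'b \<Rightarrow> 'k::field))"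
proof
  fix x
  have "(\<Sum>p\<in>fsupp f. fscale (f p) (delta p :: 'b \<Rightarrow> 'k)) x = (\<Sum>p\<in>fsupp f. if x = p then f p else 0)"
    by (simp add: sum_fun_apply fscale_apply delta_def if_distrib cong: if_cong)
  also have "\<dots> = f x"
    using assms by (simp add: fsupp_def)
  finally show "f x = (\<Sum>p\<in>fsupp f. fscale (f p) (delta p :: 'b \<Rightarrow> 'k)) x" ..
qed

lemma fbr_eq_sum_superset:
  fixes f :: "'g \<times> 'a::comm_ring_1 \<Rightarrow> 'k::field"
  assumes "finite A" "fsupp f \<subseteq> A" and "finite B" "fsupp h \<subseteq> B"
  shows "fbr br f h = (\<Sum>p\<in>A. \<Sum>q\<in>B. fscale (f p * h q) (delta (br (fst p) (fst q), snd p * snd q)))"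
proof -
  have "fbr br f h = (\<Sum>p\<in>fsupp f. \<Sum>q\<in>B. fscale (f p * h q) (delta (br (fst p) (fst q), snd p * snd q)))"
    unfolding fbr_def
    by (intro sum.cong refl sum.mono_neutral_left assms(3,4)) (auto simp: fsupp_def)
  also have "\<dots> = (\<Sum>p\<in>A. \<Sum>q\<in>B. fscale (f p * h q) (delta (br (fst p) (fst q), snd p * snd q)))"
    by (rule sum.mono_neutral_left[OF assms(1,2)]) (auto simp: fsupp_def)
  finally show ?thesis .
qed

lemma fbr_swap: "fbr br f h = fbr (\<lambda>x y. br y x) h f"
  unfolding fbr_def by (subst sum.swap) (simp add: mult.commute)

lemma fbr_add_left:
  fixes f\<^sub>1 :: "'g \<times> 'a::comm_ring_1 \<Rightarrow> 'k::field"
  assumes "finite (fsupp f\<^sub>1)" "finite (fsupp f\<^sub>2)" "finite (fsupp h)"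
  shows "fbr br (f\<^sub>1 + f\<^sub>2) h = fbr br f\<^sub>1 h + fbr br f\<^sub>2 h"
proof -
  let ?A = "fsupp f\<^sub>1 \<union> fsupp f\<^sub>2"
  have "fsupp (f\<^sub>1 + f\<^sub>2) \<subseteq> ?A" by (auto simp: fsupp_def)
  then show ?thesis
    using assms
    by (simp add: fbr_eq_sum_superset[where A="?A" and B="fsupp h"] distrib_right
        formal.scale_left_distrib sum.distrib)
qed

lemma fbr_scale_left:
  fixes f :: "'g \<times> 'a::comm_ring_1 \<Rightarrow> 'k::field"
  assumes "finite (fsupp f)" "finite (fsupp h)"
  shows "fbr br (fscale c f) h = fscale c (fbr br f h)"
  using assms fsupp_fscale_subset[of c f]
  by (simp add: fbr_eq_sum_superset[where A="fsupp f" and B="fsupp h"] formal.scale_sum_right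
      mult.assoc fscale_apply)

lemma fbr_diff_left:
  fixes f\<^sub>1 :: "'g \<times> 'a::comm_ring_1 \<Rightarrow> 'k::field"
  assumes "finite (fsupp f\<^sub>1)" "finite (fsupp f\<^sub>2)" "finite (fsupp h)"
  shows "fbr br (f\<^sub>1 - f\<^sub>2) h = fbr br f\<^sub>1 h - fbr br f\<^sub>2 h"
  using fbr_add_left[of "f\<^sub>1 - f\<^sub>2" f\<^sub>2 h br] assms finite_fsupp_diff[OF assms(1,2)]
  by (simp add: eq_diff_eq)

lemma fbr_add_right:
  fixes f :: "'g \<times> 'a::comm_ring_1 \<Rightarrow> 'k::field"
  assumes "finite (fsupp h\<^sub>1)" "finite (fsupp h\<^sub>2)" "finite (fsupp f)"
  shows "fbr br f (h\<^sub>1 + h\<^sub>2) = fbr br f h\<^sub>1 + fbr br f h\<^sub>2"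
  by (subst (1 2 3) fbr_swap) (rule fbr_add_left[OF assms])

lemma fbr_scale_right:
  fixes f :: "'g \<times> 'a::comm_ring_1 \<Rightarrow> 'k::field"
  assumes "finite (fsupp f)" "finite (fsupp h)"
  shows "fbr br f (fscale c h) = fscale c (fbr br f h)"
  by (subst (1 2) fbr_swap) (rule fbr_scale_left[OF assms(2,1)])

lemma fbr_diff_right:
  fixes f :: "'g \<times> 'a::comm_ring_1 \<Rightarrow> 'k::field"
  assumes "finite (fsupp h\<^sub>1)" "finite (fsupp h\<^sub>2)" "finite (fsupp f)"
  shows "fbr br f (h\<^sub>1 - h\<^sub>2) = fbr br f h\<^sub>1 - fbr br f h\<^sub>2"
  by (subst (1 2 3) fbr_swap) (rule fbr_diff_left[OF assms])

lemma fbr_sum_right: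
  fixes f :: "'g \<times> 'a::comm_ring_1 \<Rightarrow> 'k::field"
  assumes "finite S" "\<And>i. i \<in> S \<Longrightarrow> finite (fsupp (G i))" "finite (fsupp f)"
  shows "fbr br f (\<Sum>i\<in>S. fscale (c i) (G i)) = (\<Sum>i\<in>S. fscale (c i) (fbr br f (G i)))"
  using assms
proof (induction S rule: finite_induct)
  case empty
  then show ?case by (simp add: fbr_def)
next
  case (insert x S)
  have fin: "finite (fsupp (G x))" "finite (fsupp (\<Sum>i\<in>S. fscale (c i) (G i)))"
    using insert.prems by (auto intro!: finite_fsupp_sum finite_fsupp_fscale)
  have "fbr br f (\<Sum>i\<in>insert x S. fscale (c i) (G i))
      = fbr br f (fscale (c x) (G x)) + fbr br f (\<Sum>i\<in>S. fscale (c i) (G i))"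
    unfolding sum.insert[OF insert.hyps]
    by (rule fbr_add_right[OF finite_fsupp_fscale[OF fin(1)] fin(2) insert.prems(2)])
  also have "\<dots> = (\<Sum>i\<in>insert x S. fscale (c i) (fbr br f (G i)))"
    unfolding sum.insert[OF insert.hyps] fbr_scale_right[OF insert.prems(2) fin(1)]
    using insert.IH insert.prems by simp
  finally show ?case .
qed

lemma fbr_delta_delta:
  "fbr br (delta p) (delta q) = (delta (br (fst p) (fst q), snd p * snd q) :: 'g \<times> 'a::comm_ring_1 \<Rightarrow> 'k::field)"
  unfolding fbr_def fsupp_delta by (simp add: delta_def)

lemma tensor_rels_add_left: "delta (x + y, a) - delta (x, a) - delta (y, a) \<in> tensor_rels sg sa"
  and tensor_rels_add_right: "delta (x, a + b) - delta (x, a) - delta (x, b) \<in> tensor_rels sg sa"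
  and tensor_rels_scale_left: "delta (sg c x, a) - fscale c (delta (x, a)) \<in> tensor_rels sg sa"
  and tensor_rels_scale_right: "delta (x, sa c a) - fscale c (delta (x, a)) \<in> tensor_rels sg sa"
  unfolding tensor_rels_def by blast+

lemma tensor_relsE:
  assumes "r \<in> tensor_rels sg sa"
  obtains x y a where "r = delta (x + y, a) - delta (x, a) - delta (y, a)"
  | x a b where "r = delta (x, a + b) - delta (x, a) - delta (x, b)"
  | c x a where "r = delta (sg c x, a) - fscale c (delta (x, a))"
  | c x a where "r = delta (x, sa c a) - fscale c (delta (x, a))"
  using assms unfolding tensor_rels_def by blast

lemma subspace_tensor_R: "formal.subspace (tensor_R sg sa)"
  unfolding tensor_R_def by (rule formal.subspace_span)

lemmas tensor_R_0 = formal.subspace_0[OF subspace_tensor_R]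
  and tensor_R_add = formal.subspace_add[OF subspace_tensor_R]
  and tensor_R_diff = formal.subspace_diff[OF subspace_tensor_R]
  and tensor_R_scale = formal.subspace_scale[OF subspace_tensor_R]
  and tensor_R_sum = formal.subspace_sum[OF subspace_tensor_R]

lemma tensor_rels_subset_R: "tensor_rels sg sa \<subseteq> tensor_R sg sa"
  unfolding tensor_R_def by (rule formal.span_superset)

lemma finite_fsupp_tensor_rels: "r \<in> tensor_rels sg sa \<Longrightarrow> finite (fsupp r)"
  by (erule tensor_relsE) (auto intro!: finite_fsupp_diff finite_fsupp_fscale)

lemma finite_fsupp_tensor_R: "r \<in> tensor_R sg sa \<Longrightarrow> finite (fsupp r)"
  unfolding tensor_R_def
proof (induction rule: formal.span_induct_alt)
  case (step c s t)
  show ?case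
    by (rule finite_fsupp_add[OF finite_fsupp_fscale[OF finite_fsupp_tensor_rels[OF step(1)]] step(2)])
qed simp

lemma fbr_tensor_rels_delta:
  fixes sg :: "'k::field \<Rightarrow> 'g::ab_group_add \<Rightarrow> 'g" and sa :: "'k \<Rightarrow> 'a::comm_ring_1 \<Rightarrow> 'a"
  assumes add_left: "\<And>x y z. br (x + y) z = br x z + br y z"
    and scale_left: "\<And>c x z. br (sg c x) z = sg c (br x z)"
    and alg: "k_algebra sa"
    and r: "r \<in> tensor_rels sg sa"
  shows "fbr br r (delta q) \<in> tensor_rels sg sa"
proof -
  have sa_mult: "sa c a * b = sa c (a * b)" for c a b
    using alg unfolding k_algebra_def by simp
  note simps = fbr_diff_left fbr_scale_left finite_fsupp_diff finite_fsupp_fscale fbr_delta_delta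
  from r show ?thesis
  proof (cases rule: tensor_relsE)
    case (1 x y a)
    then show ?thesis
      using tensor_rels_add_left[where x="br x (fst q)" and y="br y (fst q)" and a="a * snd q"]
      by (simp add: simps add_left)
  next
    case (2 x a b)
    then show ?thesis
      using tensor_rels_add_right[where x="br x (fst q)" and a="a * snd q" and b="b * snd q"]
      by (simp add: simps distrib_right)
  next
    case (3 c x a)
    then show ?thesis
      using tensor_rels_scale_left[where c=c and x="br x (fst q)" and a="a * snd q"]
      by (simp add: simps scale_left)
  next
    case (4 c x a)
    then show ?thesis
      using tensor_rels_scale_right[where x="br x (fst q)" and c=c and a="a * snd q"]
      by (simp add: simps sa_mult)
  qed
qed

lemma fbr_tensor_R_left:
  fixes sg :: "'k::field \<Rightarrow> 'g::ab_group_add \<Rightarrow> 'g" and sa :: "'k \<Rightarrow> 'a::comm_ring_1 \<Rightarrow> 'a"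
  assumes add_left: "\<And>x y z. br (x + y) z = br x z + br y z"
    and scale_left: "\<And>c x z. br (sg c x) z = sg c (br x z)"
    and alg: "k_algebra sa"
    and r: "r \<in> tensor_R sg sa" and h: "finite (fsupp h)"
  shows "fbr br r h \<in> tensor_R sg sa"
proof -
  have rels: "fbr br s h \<in> tensor_R sg sa" if s: "s \<in> tensor_rels sg sa" for s
  proof -
    have "fbr br s h = (\<Sum>p\<in>fsupp h. fscale (h p) (fbr br s (delta p)))"
      by (subst fsupp_expansion[OF h]) (use h finite_fsupp_tensor_rels[OF s] in \<open>auto intro: fbr_sum_right\<close>)
    also have "\<dots> \<in> tensor_R sg sa"
      by (intro tensor_R_sum tensor_R_scale subsetD[OF tensor_rels_subset_R]
          fbr_tensor_rels_delta[where br=br, OF add_left scale_left alg s])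
    finally show ?thesis .
  qed
  from r have "finite (fsupp r) \<and> fbr br r h \<in> tensor_R sg sa"
    unfolding tensor_R_def[of sg sa]
  proof (induction rule: formal.span_induct_alt)
    case base
    then show ?case using tensor_R_0[of sg sa] by (simp add: fbr_def tensor_R_def zero_fun_def)
  next
    case (step c s t)
    have fin: "finite (fsupp s)" "finite (fsupp t)"
      using finite_fsupp_tensor_rels[OF step(1)] step(2) by simp_all
    then have "fbr br (fscale c s + t) h = fscale c (fbr br s h) + fbr br t h"
      using h by (simp add: fbr_add_left finite_fsupp_fscale fbr_scale_left)
    also have "\<dots> \<in> tensor_R sg sa"
      using rels[OF step(1)] step(2) unfolding tensor_R_def
      by (auto intro: formal.span_add formal.span_scale)
    finally show ?case
      using finite_fsupp_add[OF finite_fsupp_fscale[OF fin(1)] fin(2)]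
      unfolding tensor_R_def plus_fun_def by simp
  qed
  then show ?thesis ..
qed

lemma fbr_tensor_R_right:
  fixes sg :: "'k::field \<Rightarrow> 'g::ab_group_add \<Rightarrow> 'g" and sa :: "'k \<Rightarrow> 'a::comm_ring_1 \<Rightarrow> 'a"
  assumes add_right: "\<And>x y z. br z (x + y) = br z x + br z y"
    and scale_right: "\<And>c x z. br z (sg c x) = sg c (br z x)"
    and alg: "k_algebra sa"
    and r: "r \<in> tensor_R sg sa" and h: "finite (fsupp h)"
  shows "fbr br h r \<in> tensor_R sg sa"
  by (subst fbr_swap) (rule fbr_tensor_R_left[where br="\<lambda>x y. br y x", OF add_right scale_right alg r h])

lemma tcls_eq: "f - g \<in> tensor_R sg sa \<Longrightarrow> tcls sg sa f = tcls sg sa g"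
  unfolding tcls_def using tensor_R_add[of _ sg sa "f - g"] tensor_R_diff[of _ sg sa "f - g"]
  by (metis (no_types, lifting) diff_add_cancel diff_diff_eq2)

lemma trep_tcls: "trep (tcls sg sa f) - f \<in> tensor_R sg sa"
proof -
  have "f \<in> tcls sg sa f" unfolding tcls_def using tensor_R_0 by simp
  then have "trep (tcls sg sa f) \<in> tcls sg sa f"
    unfolding trep_def by (rule someI[of "\<lambda>h. h \<in> tcls sg sa f"])
  then show ?thesis unfolding tcls_def by simp
qed

lemma tcls_in_tensor_carrier: "finite (fsupp f) \<Longrightarrow> tcls sg sa f \<in> tensor_carrier sg sa"
  unfolding tensor_carrier_def by blast

lemma tadd_tcls: "tadd sg sa (tcls sg sa f) (tcls sg sa g) = tcls sg sa (f + g)"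
proof -
  have "trep (tcls sg sa f) + trep (tcls sg sa g) - (f + g)
      = (trep (tcls sg sa f) - f) + (trep (tcls sg sa g) - g)"
    by (simp add: algebra_simps)
  also have "\<dots> \<in> tensor_R sg sa"
    by (rule tensor_R_add[OF trep_tcls trep_tcls])
  finally show ?thesis unfolding tadd_def by (rule tcls_eq)
qed

lemma tsc_tcls: "tsc sg sa c (tcls sg sa f) = tcls sg sa (fscale c f)"
proof -
  have "fscale c (trep (tcls sg sa f)) - fscale c f = fscale c (trep (tcls sg sa f) - f)"
    by (simp add: formal.scale_right_diff_distrib)
  also have "\<dots> \<in> tensor_R sg sa"
    by (rule tensor_R_scale[OF trep_tcls])
  finally show ?thesis unfolding tsc_def by (rule tcls_eq)
qed

lemma (in lie) tbr_tcls:
  assumes alg: "k_algebra sa" and f: "finite (fsupp f)" and g: "finite (fsupp g)"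
  shows "tbr sg sa br (tcls sg sa f) (tcls sg sa g) = tcls sg sa (fbr br f g)"
proof -
  define f' where "f' = trep (tcls sg sa f)"
  define g' where "g' = trep (tcls sg sa g)"
  have rf: "f' - f \<in> tensor_R sg sa" and rg: "g' - g \<in> tensor_R sg sa"
    unfolding f'_def g'_def by (rule trep_tcls)+
  have f': "finite (fsupp f')" and g': "finite (fsupp g')"
    using finite_fsupp_add[OF finite_fsupp_tensor_R[OF rf] f] finite_fsupp_add[OF finite_fsupp_tensor_R[OF rg] g]
    by simp_all
  have "fbr br f' g' - fbr br f g = fbr br (f' - f) g' + fbr br f (g' - g)"
    by (simp add: fbr_diff_left[OF f' f g'] fbr_diff_right[OF g' g f])
  also have "\<dots> \<in> tensor_R sg sa"
    by (intro tensor_R_add fbr_tensor_R_left[where br=br, OF br_add_left br_scale_left alg rf g']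
        fbr_tensor_R_right[where br=br, OF br_add_right br_scale_right alg rg f])
  finally show ?thesis
    unfolding tbr_def f'_def g'_def by (rule tcls_eq)
qed

text \<open>The formal counterpart of T \<otimes> id.\<close>
definition fmap_fst :: "('b \<Rightarrow> 'c) \<Rightarrow> ('b \<times> 'a \<Rightarrow> 'k::field) \<Rightarrow> ('c \<times> 'a \<Rightarrow> 'k)" where
  "fmap_fst T f = (\<Sum>q\<in>fsupp f. fscale (f q) (delta (T (fst q), snd q)))"

lemma finite_fsupp_fmap_fst: "finite (fsupp (fmap_fst T f))"
  unfolding fmap_fst_def by (intro finite_fsupp_sum finite_fsupp_fscale) simp

lemma fmap_fst_id: "finite (fsupp f) \<Longrightarrow> fmap_fst (\<lambda>v. v) f = f"
  unfolding fmap_fst_def using fsupp_expansion[of f] by simp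

lemma fbr_delta_right:
  "fbr br f (delta (z, 1)) = fmap_fst (\<lambda>v. br v z) (f :: 'g \<times> 'a::comm_ring_1 \<Rightarrow> 'k::field)"
  unfolding fbr_def fmap_fst_def fsupp_delta by (simp add: delta_def fscale_def)

lemma fbr_delta_left_fmap_fst:
  fixes f :: "'g \<times> 'a::comm_ring_1 \<Rightarrow> 'k::field"
  assumes "finite (fsupp f)"
  shows "fbr br (delta (y, 1)) (fmap_fst T f) = fmap_fst (\<lambda>v. br y (T v)) f"
  unfolding fmap_fst_def using assms by (simp add: fbr_sum_right fbr_delta_delta)

lemma fmap_fst_add:
  "fmap_fst (\<lambda>v. T v + S v) f - (fmap_fst T f + fmap_fst S f) \<in> tensor_R sg sa"
proof -
  have "fmap_fst (\<lambda>v. T v + S v) f - (fmap_fst T f + fmap_fst S f) =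
      (\<Sum>q\<in>fsupp f. fscale (f q) (delta (T (fst q) + S (fst q), snd q)
        - delta (T (fst q), snd q) - delta (S (fst q), snd q)))"
    unfolding fmap_fst_def
    by (simp add: sum.distrib[symmetric] sum_subtractf[symmetric] formal.scale_right_diff_distrib
        diff_diff_add formal.scale_right_distrib)
  also have "\<dots> \<in> tensor_R sg sa"
    by (intro tensor_R_sum tensor_R_scale subsetD[OF tensor_rels_subset_R] tensor_rels_add_left)
  finally show ?thesis .
qed

lemma fmap_fst_scale:
  "fmap_fst (\<lambda>v. sg c (T v)) f - fscale c (fmap_fst T f) \<in> tensor_R sg sa"
proof -
  have "fmap_fst (\<lambda>v. sg c (T v)) f - fscale c (fmap_fst T f) =
      (\<Sum>q\<in>fsupp f. fscale (f q) (delta (sg c (T (fst q)), snd q) - fscale c (delta (T (fst q), snd q))))"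
    unfolding fmap_fst_def
    by (simp add: formal.scale_sum_right sum_subtractf[symmetric] formal.scale_right_diff_distrib
        mult.commute)
  also have "\<dots> \<in> tensor_R sg sa"
    by (intro tensor_R_sum tensor_R_scale subsetD[OF tensor_rels_subset_R] tensor_rels_scale_left)
  finally show ?thesis .
qed

context lie
begin

lemma mult_ideal_maps_lie_Z_into_ideal:
  assumes alg: "k_algebra sa"
    and ideal: "lie_ideal (tensor_carrier sg sa) (tadd sg sa) (tsc sg sa) (tbr sg sa br) (tzero sg sa) I"
    and f: "finite (fsupp f)"
    and Z: "tcls sg sa f \<in> lie_Z (tensor_carrier sg sa) (tbr sg sa br) I"
    and T: "T \<in> mult_ideal"
  shows "tcls sg sa (fmap_fst T f) \<in> I"
  using T
proof induction
  case (right_mult z)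
  have "tcls sg sa (fmap_fst (\<lambda>v. br v z) f) = tbr sg sa br (tcls sg sa f) (tcls sg sa (delta (z, 1)))"
    by (simp add: tbr_tcls[OF alg f] fbr_delta_right)
  then show ?case
    using Z tcls_in_tensor_carrier[of "delta (z, 1)" sg sa] unfolding lie_Z_def by simp
next
  case (left_mult T y)
  have "tcls sg sa (fmap_fst (\<lambda>v. br y (T v)) f)
      = tbr sg sa br (tcls sg sa (delta (y, 1))) (tcls sg sa (fmap_fst T f))"
    by (simp add: tbr_tcls[OF alg] finite_fsupp_fmap_fst fbr_delta_left_fmap_fst[OF f])
  then show ?case
    using lie_idealD(5)[OF ideal left_mult.IH tcls_in_tensor_carrier] by simp
next
  case (add T S)
  have "tcls sg sa (fmap_fst (\<lambda>v. T v + S v) f) = tadd sg sa (tcls sg sa (fmap_fst T f)) (tcls sg sa (fmap_fst S f))"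
    unfolding tadd_tcls by (rule tcls_eq[OF fmap_fst_add])
  then show ?case
    using lie_idealD(2)[OF ideal add.IH] by simp
next
  case (scale T c)
  have "tcls sg sa (fmap_fst (\<lambda>v. sg c (T v)) f) = tsc sg sa c (tcls sg sa (fmap_fst T f))"
    unfolding tsc_tcls by (rule tcls_eq[OF fmap_fst_scale])
  then show ?case
    using lie_idealD(3)[OF ideal scale.IH] by simp
qed

lemma closed_ideal_if_id_in_mult_ideal:
  assumes id: "(\<lambda>v. v) \<in> mult_ideal"
    and alg: "k_algebra sa"
    and ideal: "lie_ideal (tensor_carrier sg sa) (tadd sg sa) (tsc sg sa) (tbr sg sa br) (tzero sg sa) I"
  shows "closed_ideal (tensor_carrier sg sa) (tbr sg sa br) I"
  unfolding closed_ideal_def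
proof
  show "lie_Z (tensor_carrier sg sa) (tbr sg sa br) I \<subseteq> I"
  proof
    fix x assume x: "x \<in> lie_Z (tensor_carrier sg sa) (tbr sg sa br) I"
    then obtain f where f: "x = tcls sg sa f" "finite (fsupp f)"
      unfolding lie_Z_def tensor_carrier_def by blast
    with x have "tcls sg sa (fmap_fst (\<lambda>v. v) f) \<in> I"
      using mult_ideal_maps_lie_Z_into_ideal[OF alg ideal f(2) _ id] by simp
    with f show "x \<in> I" by (simp add: fmap_fst_id)
  qed
  show "I \<subseteq> lie_Z (tensor_carrier sg sa) (tbr sg sa br) I"
    using lie_idealD(1,4)[OF ideal] unfolding lie_Z_def by blast
qed

end

theorem corollary4p4:
  fixes sg :: "'k::field \<Rightarrow> 'g::ab_group_add \<Rightarrow> 'g"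
    and br :: "'g \<Rightarrow> 'g \<Rightarrow> 'g"
    and sa :: "'k \<Rightarrow> 'a::comm_ring_1 \<Rightarrow> 'a"
    and I :: "('g \<times> 'a \<Rightarrow> 'k) set set"
  assumes char: "(2::'k) \<noteq> 0"
    and lie: "lie_algebra sg br"
    and fd: "finite_dim sg"
    and cs: "central_simple_lie sg br"
    and alg: "k_algebra sa"
    and ideal: "lie_ideal (tensor_carrier sg sa) (tadd sg sa) (tsc sg sa) (tbr sg sa br) (tzero sg sa) I"
  shows "closed_ideal (tensor_carrier sg sa) (tbr sg sa br) I"
proof -
  interpret central_simple sg br
    by unfold_locales (fact lie cs)+
  show ?thesis
    by (rule closed_ideal_if_id_in_mult_ideal[OF id_in_mult_ideal[OF fd] alg ideal])
qed

end
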